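(* Let $q\in(0.5,1)$. Consider the discrete-time system $$x_{k+1}=f(x_k)+G(x_k)u_k+w_k,$$ with state $x_k\in\mathbb{R}^n$, input $u_k\in\mathbb{R}^m$, disturbance $w_k\in\mathbb{R}^n$, and unknown functions $f:\mathbb{R}^n\to\mathbb{R}^n$, $G:\mathbb{R}^n\to\mathbb{R}^{n\times m}$. Let $H=[h_1,\dots,h_{n_c}]^\top\in\mathbb{R}^{n_c\times n}$ and $d=[d_1,\dots,d_{n_c}]^\top\in\mathbb{R}^{n_c}$. Assume: (A1) matrices $A\in\mathbb{R}^{n\times n}$, $B\in\mathbb{R}^{m\times m}$-compatible $B\in\mathbb{R}^{n\times m}$ are known, with approximation error $e(x,u):=f(x)+G(x)u-(Ax+Bu)$; (A2) the disturbance $w_k$ follows $\mathcal{N}(\mu_w,\Sigma_w)$ with known $\mu_w\in\mathbb{R}^n$, $\Sigma_w\in\mathbb{R}^{n\times n}$, and $w_k$ is uncorrelated with the exploration term $\varepsilon_k$ below; (A3) for a positive integer $\tau$, numbers $\bar\delta_j<\infty$, $\bar\Delta_j<\infty$ ($j=1,\dots,n_c$) are known with $\bar\delta_j\ge\sup_{x\in\mathbb{R}^n,u\in\mathbb{R}^m}|h_j^\top e(x,u)|$ and $\bar\Delta_j\ge\sup_{x\in\mathbb{R}^n,u\in\mathbb{R}^m}|h_j^\top(A^{\tau-1}+A^{\tau-2}+\cdots+I)e(x,u)|$. Suppose that, when the state at time $k$ is $x_k$, the input is generated as $u_k=\mu(x_k;\theta_k)+\varepsilon_k$ with $\varepsilon_k\sim\mathcal{N}(0,\Sigma_k)$,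 $\Sigma_k\in\mathbb{R}^{m\times m}$. Let $B'=[B,\ I]\in\mathbb{R}^{n\times(m+n)}$. If $$\left\|h_j^\top B'\begin{bmatrix}\Sigma_k&0\\0&\Sigma_w\end{bmatrix}^{1/2}\right\|_2\le\frac{1}{\Phi^{-1}(q)}\Big\{d_j-h_j^\top\big(Ax_k+B\mu(x_k;\theta_k)+\mu_w\big)+\delta_j\Big\}$$ for all $j=1,\dots,n_c$ and all $\delta_j\in\{\bar\delta_j,-\bar\delta_j\}$, then $\Pr\{h_j^\top x_{k+1}\le d_j\}\ge q$ for all $j=1,\dots,n_c$.
   Context: $\Phi$ denotes the cumulative distribution function of the standard normal distribution. $\mu(\cdot;\theta):\mathbb{R}^n\to\mathbb{R}^m$ is a deterministic feedback law (base policy) with parameter $\theta_k$ at time $k$. For a positive semidefinite matrix $M$, $M^{1/2}$ denotes its matrix square root. Probabilities are over the randomness of $\varepsilon_k$ and $w_k$ given the current state $x_k$. $\|\cdot\|_2$ is the Euclidean norm of a row vector. *)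

theory Defs
  imports "HOL-Analysis.Analysis" "HOL-Probability.Probability"
begin

definition Phi :: "real \<Rightarrow> real" where
  "Phi x = measure (density lborel std_normal_density) {..x}"

definition Phi_inv :: "real \<Rightarrow> real" where
  "Phi_inv q = (THE x. Phi x = q)"

definition gaussian_rv :: "'a measure \<Rightarrow> ('a \<Rightarrow> real) \<Rightarrow> real \<Rightarrow> real \<Rightarrow> bool" where
  "gaussian_rv M X m v \<longleftrightarrow>
     X \<in> borel_measurable M \<and>
     ((v = 0 \<and> distr M borel X = return borel m) \<or>
      (v > 0 \<and> distributed M lborel X (normal_density m (sqrt v))))"

definition psd_matrix :: "real^'n^'n \<Rightarrow> bool" where
  "psd_matrix S \<longleftrightarrow> transpose S = S \<and> (\<forall>x. 0 \<le> x \<bullet> (S *v x))"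

definition mvn_rv :: "'a measure \<Rightarrow> ('a \<Rightarrow> real^'n) \<Rightarrow> real^'n \<Rightarrow> real^'n^'n \<Rightarrow> bool" where
  "mvn_rv M X mu S \<longleftrightarrow> psd_matrix S \<and> X \<in> borel_measurable M \<and>
     (\<forall>a. gaussian_rv M (\<lambda>\<omega>. a \<bullet> X \<omega>) (a \<bullet> mu) (a \<bullet> (S *v a)))"

definition mat_sqrt :: "real^'n^'n \<Rightarrow> real^'n^'n" where
  "mat_sqrt S = (THE R. psd_matrix R \<and> R ** R = S)"

primrec mpow :: "real^'n^'n \<Rightarrow> nat \<Rightarrow> real^'n^'n" where
  "mpow A 0 = mat 1"
| "mpow A (Suc i) = A ** mpow A i"

definition aug_B :: "real^'m^'n \<Rightarrow> real^('m + 'n)^'n" where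
  "aug_B B = (\<chi> i j. case j of Inl l \<Rightarrow> B $ i $ l | Inr l \<Rightarrow> (if l = i then 1 else 0))"

definition block_diag :: "real^'m^'m \<Rightarrow> real^'n^'n \<Rightarrow> real^('m + 'n)^('m + 'n)" where
  "block_diag S1 S2 = (\<chi> i j. case (i, j) of
       (Inl a, Inl b) \<Rightarrow> S1 $ a $ b
     | (Inr a, Inr b) \<Rightarrow> S2 $ a $ b
     | _ \<Rightarrow> 0)"

end

theory Submission
  imports Defs
begin

text \<open>
  The constraint value \<open>h\<^sub>j\<^sup>T x\<^sub>k\<^sub>+\<^sub>1\<close> splits into the model
  error \<open>h\<^sub>j\<^sup>T e(x,u) \<le> \<delta>bar\<^sub>j\<close>, the deterministic term \<open>h\<^sub>j\<^sup>T (A x + B \<mu>(x;\<theta>))\<close>, and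
  \<open>Z = h\<^sub>j\<^sup>T B \<epsilon> + h\<^sub>j\<^sup>T w\<close>, a sum of independent scalar Gaussians with mean \<open>h\<^sub>j\<^sup>T \<mu>\<^sub>w\<close>
  and variance \<open>\<sigma>\<^sup>2 = (B\<^sup>T h\<^sub>j)\<^sup>T \<Sigma> (B\<^sup>T h\<^sub>j) + h\<^sub>j\<^sup>T \<Sigma>\<^sub>w h\<^sub>j\<close>. Since the symmetric PSD square
  root of \<open>diag(\<Sigma>, \<Sigma>\<^sub>w)\<close> squares to it, the norm in the hypothesis is exactly \<open>\<sigma>\<close>, so the
  hypothesis for \<open>\<delta>\<^sub>j = -\<delta>bar\<^sub>j\<close> places the threshold for \<open>Z\<close> at least \<open>\<Phi>\<^sup>-\<^sup>1(q)\<close>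
  standard deviations above its mean; hence \<open>Z\<close> stays below it with probability at least \<open>q\<close>.
  Identifying the square root defined by a description requires its existence and uniqueness,
  which come from the spectral theorem for self-adjoint operators.
\<close>

lemma linear_le_quadratic_imp_zero:
  fixes a k :: real
  assumes "\<And>t. t * a \<le> t\<^sup>2 * k"
  shows "a = 0"
proof (rule ccontr)
  assume "a \<noteq> 0"
  define r where "r = \<bar>k\<bar> / (2 * (\<bar>k\<bar> + 1))"
  define t where "t = a / (2 * (\<bar>k\<bar> + 1))"
  have "t * a = a\<^sup>2 / (2 * (\<bar>k\<bar> + 1))" by (simp add: t_def power2_eq_square)
  also have "\<dots> > 0" using \<open>a \<noteq> 0\<close> by simp
  finally have ta: "t * a > 0" .
  have r: "r < 1" by (simp add: r_def field_simps)
  have "t * a \<le> t\<^sup>2 * \<bar>k\<bar>"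
    using assms[of t] by (meson abs_ge_self mult_left_mono order_trans zero_le_power2)
  also have "t\<^sup>2 * \<bar>k\<bar> = (t * a) * r"
    by (simp add: t_def r_def power2_eq_square)
  also have "\<dots> < t * a" using mult_strict_left_mono[OF r ta] by simp
  finally show False by simp
qed

lemma quadratic_form_attains_max_on_unit_sphere:
  fixes T :: "'a::euclidean_space \<Rightarrow> 'a"
  assumes lin: "linear T" and V: "subspace V" and x0: "x0 \<in> V" "x0 \<noteq> 0"
  obtains v where "v \<in> V" "norm v = 1" "\<And>y. y \<in> V \<Longrightarrow> y \<bullet> T y \<le> (v \<bullet> T v) * (y \<bullet> y)"
proof -
  define K where "K = V \<inter> sphere 0 1"
  have "compact K" unfolding K_def
    by (simp add: closed_subspace closed_Int_compact V)
  moreover have "x0 /\<^sub>R norm x0 \<in> K" unfolding K_def using x0 V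
    by (auto simp: subspace_scale)
  moreover have "continuous_on K (\<lambda>y. y \<bullet> T y)"
    using lin by (intro continuous_intros linear_continuous_on) (auto simp: linear_conv_bounded_linear)
  ultimately obtain v where v: "v \<in> K" and vmax: "\<And>y. y \<in> K \<Longrightarrow> y \<bullet> T y \<le> v \<bullet> T v"
    using continuous_attains_sup[of K "\<lambda>y. y \<bullet> T y"] by blast
  have "y \<bullet> T y \<le> (v \<bullet> T v) * (y \<bullet> y)" if "y \<in> V" for y
  proof (cases "y = 0")
    case False
    have "y /\<^sub>R norm y \<in> K" unfolding K_def using that V False by (auto simp: subspace_scale)
    hence "(y /\<^sub>R norm y) \<bullet> T (y /\<^sub>R norm y) \<le> v \<bullet> T v" using vmax by blast
    hence "(y \<bullet> T y) / (norm y)\<^sup>2 \<le> v \<bullet> T v" using lin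
      by (simp add: linear_scale power2_eq_square divide_inverse mult.commute mult.left_commute)
    then show ?thesis using False by (simp add: divide_le_eq power2_norm_eq_inner)
  qed (use lin in \<open>simp add: linear_0\<close>)
  then show ?thesis using that v by (auto simp: K_def)
qed

lemma self_adjoint_unit_eigenvector:
  fixes T :: "'a::euclidean_space \<Rightarrow> 'a"
  assumes lin: "linear T" and sa: "\<And>x y. T x \<bullet> y = x \<bullet> T y"
    and V: "subspace V" and inv: "\<And>x. x \<in> V \<Longrightarrow> T x \<in> V" and x0: "x0 \<in> V" "x0 \<noteq> 0"
  obtains v where "v \<in> V" "norm v = 1" "T v = (v \<bullet> T v) *\<^sub>R v"
proof -
  obtain v where vV: "v \<in> V" and nv: "norm v = 1"
    and le: "\<And>y. y \<in> V \<Longrightarrow> y \<bullet> T y \<le> (v \<bullet> T v) * (y \<bullet> y)"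
    using quadratic_form_attains_max_on_unit_sphere[OF lin V x0] by blast
  define l where "l = v \<bullet> T v"
  have vv: "v \<bullet> v = 1" using nv by (simp add: norm_eq_sqrt_inner)
  define u where "u = T v - l *\<^sub>R v"
  have uV: "u \<in> V" unfolding u_def using vV inv V by (simp add: subspace_diff subspace_scale)
  have uv: "u \<bullet> v = 0" unfolding u_def l_def using vv
    by (simp add: inner_diff_left inner_commute[of "T v" v])
  have uTv: "u \<bullet> T v = u \<bullet> u"
    unfolding u_def by (simp add: inner_diff_left inner_diff_right l_def inner_commute vv)
  \<comment> \<open>The form \<open>y \<bullet> T y - l (y \<bullet> y)\<close> is maximal at \<open>v\<close>, so its first variation
    in the direction \<open>u\<close> vanishes.\<close>
  have "t * (2 * (u \<bullet> u)) \<le> t\<^sup>2 * (l * (u \<bullet> u) - (u \<bullet> T u))" for t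
  proof -
    have "v + t *\<^sub>R u \<in> V" using vV uV V by (simp add: subspace_add subspace_scale)
    from le[OF this] have "(v + t *\<^sub>R u) \<bullet> T (v + t *\<^sub>R u) \<le> l * ((v + t *\<^sub>R u) \<bullet> (v + t *\<^sub>R u))"
      by (simp add: l_def)
    moreover have "(v + t *\<^sub>R u) \<bullet> T (v + t *\<^sub>R u) = l + 2 * t * (u \<bullet> u) + t\<^sup>2 * (u \<bullet> T u)"
      using lin uTv sa[of u v] unfolding l_def
      by (simp add: linear_add linear_scale inner_add_left inner_add_right power2_eq_square
          algebra_simps inner_commute)
    moreover have "(v + t *\<^sub>R u) \<bullet> (v + t *\<^sub>R u) = 1 + t\<^sup>2 * (u \<bullet> u)"
      using vv uv by (simp add: inner_add_left inner_add_right power2_eq_square inner_commute)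
    ultimately have "l + 2 * t * (u \<bullet> u) + t\<^sup>2 * (u \<bullet> T u) \<le> l * (1 + t\<^sup>2 * (u \<bullet> u))"
      by metis
    then show ?thesis by (simp add: algebra_simps)
  qed
  then have "2 * (u \<bullet> u) = 0" by (rule linear_le_quadratic_imp_zero)
  then have "T v = l *\<^sub>R v" unfolding u_def by simp
  then show ?thesis using that vV nv l_def by blast
qed

lemma self_adjoint_orthogonal_eigenvector_invariant:
  assumes "\<And>x y. T x \<bullet> y = x \<bullet> T y" "T v = c *\<^sub>R v" "orthogonal v x"
  shows "orthogonal v (T x)"
proof -
  have "v \<bullet> T x = T v \<bullet> x" by (simp add: assms(1))
  then show ?thesis using assms(2,3) by (simp add: orthogonal_def)
qed

lemma inner_sum_orthonormal:
  fixes B :: "'a::real_inner set"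
  assumes "finite B" "pairwise orthogonal B" "b \<in> B" "norm b = 1"
  shows "b \<bullet> (\<Sum>c\<in>B. g c *\<^sub>R c) = g b"
proof -
  have "b \<bullet> (\<Sum>c\<in>B. g c *\<^sub>R c) = g b * (b \<bullet> b) + (\<Sum>c\<in>B - {b}. g c * (b \<bullet> c))"
    using assms by (simp add: sum.remove inner_add_right inner_sum_right)
  also have "(\<Sum>c\<in>B - {b}. g c * (b \<bullet> c)) = 0"
    using assms by (intro sum.neutral) (auto simp: pairwise_def orthogonal_def)
  finally show ?thesis using assms(4) by (simp add: norm_eq_sqrt_inner)
qed

lemma expansion_insert_orthogonal:
  fixes v x :: "'a::real_inner"
  assumes "finite B" "v \<notin> B" and orth: "\<And>b. b \<in> B \<Longrightarrow> b \<bullet> v = 0"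
    and expand: "x - (v \<bullet> x) *\<^sub>R v = (\<Sum>b\<in>B. (b \<bullet> (x - (v \<bullet> x) *\<^sub>R v)) *\<^sub>R b)"
  shows "x = (\<Sum>b\<in>insert v B. (b \<bullet> x) *\<^sub>R b)"
proof -
  have "(\<Sum>b\<in>B. (b \<bullet> (x - (v \<bullet> x) *\<^sub>R v)) *\<^sub>R b) = (\<Sum>b\<in>B. (b \<bullet> x) *\<^sub>R b)"
    using orth by (intro sum.cong) (auto simp: inner_diff_right)
  then show ?thesis using expand assms(1,2) by (simp add: algebra_simps)
qed

lemma self_adjoint_orthonormal_eigenbasis:
  fixes T :: "'a::euclidean_space \<Rightarrow> 'a"
  assumes lin: "linear T" and sa: "\<And>x y. T x \<bullet> y = x \<bullet> T y"
    and "subspace V" "\<And>x. x \<in> V \<Longrightarrow> T x \<in> V"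
  shows "\<exists>B. finite B \<and> B \<subseteq> V \<and> pairwise orthogonal B \<and>
    (\<forall>b\<in>B. norm b = 1 \<and> T b = (b \<bullet> T b) *\<^sub>R b) \<and> (\<forall>x\<in>V. x = (\<Sum>b\<in>B. (b \<bullet> x) *\<^sub>R b))"
  using assms(3,4)
proof (induction "dim V" arbitrary: V rule: less_induct)
  case less
  note V = less.prems(1) and inv = less.prems(2)
  show ?case
  proof (cases "V \<subseteq> {0}")
    case True
    then show ?thesis by (intro exI[of _ "{}"]) auto
  next
    case False
    then obtain x0 where "x0 \<in> V" "x0 \<noteq> 0" by auto
    with self_adjoint_unit_eigenvector[OF lin sa V inv]
    obtain v where vV: "v \<in> V" and nv: "norm v = 1" and Tv: "T v = (v \<bullet> T v) *\<^sub>R v" by blast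
    have vv: "v \<bullet> v = 1" using nv by (simp add: norm_eq_sqrt_inner)
    define W where "W = V \<inter> {x. orthogonal v x}"
    have W: "subspace W"
      unfolding W_def by (intro subspace_inter V subspace_orthogonal_to_vector)
    have invW: "T x \<in> W" if "x \<in> W" for x
      using that inv self_adjoint_orthogonal_eigenvector_invariant[OF sa Tv] by (simp add: W_def)
    have "v \<notin> W" using vv by (simp add: W_def orthogonal_def)
    then have "W \<subset> V" using vV W_def by blast
    then have "dim W < dim V"
      using W V by (metis dim_psubset span_eq_iff)
    from less.hyps[OF this W invW] obtain B where B: "finite B" "B \<subseteq> W" "pairwise orthogonal B"
      "\<forall>b\<in>B. norm b = 1 \<and> T b = (b \<bullet> T b) *\<^sub>R b" "\<forall>x\<in>W. x = (\<Sum>b\<in>B. (b \<bullet> x) *\<^sub>R b)"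
      by blast
    have vB: "v \<notin> B" using B(2) vv by (auto simp: W_def orthogonal_def)
    have Bv: "b \<bullet> v = 0" "v \<bullet> b = 0" if "b \<in> B" for b
      using B(2) that by (auto simp: W_def orthogonal_def inner_commute)
    show ?thesis
    proof (intro exI[of _ "insert v B"] conjI ballI)
      show "finite (insert v B)" "insert v B \<subseteq> V" using B vV by (auto simp: W_def)
      show "pairwise orthogonal (insert v B)"
        using B(3) Bv by (auto simp: pairwise_insert orthogonal_def)
    next
      fix b assume "b \<in> insert v B"
      then show "norm b = 1" "T b = (b \<bullet> T b) *\<^sub>R b" using B nv Tv by auto
    next
      fix x assume "x \<in> V"
      then have "x - (v \<bullet> x) *\<^sub>R v \<in> W" unfolding W_def orthogonal_def using vV V vv
        by (simp add: subspace_diff subspace_scale inner_diff_right)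
      then show "x = (\<Sum>b\<in>insert v B. (b \<bullet> x) *\<^sub>R b)"
        using B(1,5) vB Bv by (intro expansion_insert_orthogonal) auto
    qed
  qed
qed

lemma symmetric_matrix_inner_swap:
  fixes S :: "real^'n^'n"
  assumes "transpose S = S"
  shows "(S *v x) \<bullet> y = x \<bullet> (S *v y)"
  by (metis assms dot_lmul_matrix transpose_matrix_vector)

lemma symmetric_matrix_if_inner_swap:
  fixes S :: "real^'n^'n"
  assumes "\<And>x y. (S *v x) \<bullet> y = x \<bullet> (S *v y)"
  shows "transpose S = S"
proof -
  have "(\<lambda>x. transpose S *v x) = (\<lambda>x. S *v x)"
    using adjoint_unique[of "\<lambda>x. S *v x" "\<lambda>x. S *v x"] assms by (simp add: adjoint_matrix)
  then show ?thesis by (simp add: matrix_eq fun_eq_iff)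
qed

lemma matrix_vector_mult_in_basis:
  fixes A :: "real^'n^'m"
  assumes "\<And>x. x = (\<Sum>b\<in>B. (b \<bullet> x) *\<^sub>R b)"
  shows "A *v x = (\<Sum>b\<in>B. (b \<bullet> x) *\<^sub>R (A *v b))"
proof -
  have "A *v x = A *v (\<Sum>b\<in>B. (b \<bullet> x) *\<^sub>R b)" by (rule arg_cong[OF assms])
  then show ?thesis by (simp add: linear_sum[OF matrix_vector_mul_linear] o_def matrix_vector_mult_scaleR)
qed

lemma psd_matrix_orthonormal_eigenbasis:
  fixes S :: "real^'n^'n"
  assumes "psd_matrix S"
  obtains B where "finite B" "pairwise orthogonal B" "\<And>b. b \<in> B \<Longrightarrow> norm b = 1"
    "\<And>b. b \<in> B \<Longrightarrow> S *v b = (b \<bullet> (S *v b)) *\<^sub>R b"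
    "\<And>x. x = (\<Sum>b\<in>B. (b \<bullet> x) *\<^sub>R b)"
proof -
  have "linear ((*v) S)" by simp
  moreover have "\<And>x y. (S *v x) \<bullet> y = x \<bullet> (S *v y)"
    using assms by (simp add: psd_matrix_def symmetric_matrix_inner_swap)
  ultimately show ?thesis
    using self_adjoint_orthonormal_eigenbasis[of "(*v) S" UNIV] that by auto
qed

lemma psd_matrix_sqrt_on_eigenvector:
  fixes R :: "real^'n^'n"
  assumes R: "psd_matrix R" and b: "(R ** R) *v b = l *\<^sub>R b" and l: "0 \<le> l"
  shows "R *v b = sqrt l *\<^sub>R b"
proof -
  define s where "s = sqrt l"
  define y where "y = R *v b - s *\<^sub>R b"
  have ss: "s * s = l" using l by (simp add: s_def)
  \<comment> \<open>\<open>y\<close> is an eigenvector of \<open>R\<close> for the eigenvalue \<open>-s \<le> 0\<close>, which positivity excludes.\<close>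
  have Ry: "R *v y = - s *\<^sub>R y"
    using b ss unfolding y_def
    by (simp add: algebra_simps matrix_vector_mult_diff_distrib matrix_vector_mult_scaleR
        matrix_vector_mul_assoc)
  have "y = 0"
  proof (cases "s = 0")
    case True
    have "y \<bullet> y = b \<bullet> (R *v (R *v b))"
      using True R by (simp add: y_def psd_matrix_def symmetric_matrix_inner_swap)
    also have "\<dots> = 0" using True ss b by (simp add: matrix_vector_mul_assoc)
    finally show ?thesis by simp
  next
    case False
    then have "s > 0" using l by (simp add: s_def)
    have "0 \<le> y \<bullet> (R *v y)" using R by (simp add: psd_matrix_def)
    also have "\<dots> = - s * (y \<bullet> y)" by (simp add: Ry)
    finally have "y \<bullet> y \<le> 0" using \<open>s > 0\<close> by (simp add: mult_le_0_iff)
    then show ?thesis by (metis inner_ge_zero inner_eq_zero_iff order_antisym)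
  qed
  then show ?thesis by (simp add: y_def s_def)
qed

lemma psd_matrix_sqrt_unique:
  fixes S :: "real^'n^'n"
  assumes "psd_matrix S" "psd_matrix R" "R ** R = S" "psd_matrix R'" "R' ** R' = S"
  shows "R = R'"
proof -
  obtain B where "finite B" "pairwise orthogonal B" "\<And>b. b \<in> B \<Longrightarrow> norm b = 1"
    and eig: "\<And>b. b \<in> B \<Longrightarrow> S *v b = (b \<bullet> (S *v b)) *\<^sub>R b"
    and expand: "\<And>x. x = (\<Sum>b\<in>B. (b \<bullet> x) *\<^sub>R b)"
    using psd_matrix_orthonormal_eigenbasis[OF assms(1)] by blast
  have nonneg: "0 \<le> b \<bullet> (S *v b)" for b using assms(1) by (simp add: psd_matrix_def)
  have root_on_B: "Q *v b = sqrt (b \<bullet> (S *v b)) *\<^sub>R b" if "psd_matrix Q" "Q ** Q = S" "b \<in> B" for Q b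
    by (rule psd_matrix_sqrt_on_eigenvector[OF that(1) _ nonneg]) (unfold that(2), rule eig[OF that(3)])
  have RR': "R *v b = R' *v b" if "b \<in> B" for b
    using root_on_B[OF assms(2,3) that] root_on_B[OF assms(4,5) that] by simp
  have "R *v x = R' *v x" for x
  proof -
    have "R *v x = (\<Sum>b\<in>B. (b \<bullet> x) *\<^sub>R (R *v b))" by (rule matrix_vector_mult_in_basis[OF expand])
    also have "\<dots> = (\<Sum>b\<in>B. (b \<bullet> x) *\<^sub>R (R' *v b))" by (simp add: RR')
    also have "\<dots> = R' *v x" by (rule matrix_vector_mult_in_basis[OF expand, symmetric])
    finally show ?thesis .
  qed
  then show ?thesis by (simp add: matrix_eq)
qed

lemma psd_matrix_sqrt_exists:
  fixes S :: "real^'n^'n"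
  assumes psd: "psd_matrix S"
  obtains R where "psd_matrix R" "R ** R = S"
proof -
  obtain B where fin: "finite B" and orth: "pairwise orthogonal B" and unit: "\<And>b. b \<in> B \<Longrightarrow> norm b = 1"
    and eig: "\<And>b. b \<in> B \<Longrightarrow> S *v b = (b \<bullet> (S *v b)) *\<^sub>R b"
    and expand: "\<And>x. x = (\<Sum>b\<in>B. (b \<bullet> x) *\<^sub>R b)"
    using psd_matrix_orthonormal_eigenbasis[OF psd] by blast
  define lam where "lam b = b \<bullet> (S *v b)" for b
  have lam: "lam b \<ge> 0" for b using psd by (simp add: lam_def psd_matrix_def)
  have eig_lam: "S *v b = lam b *\<^sub>R b" if "b \<in> B" for b unfolding lam_def by (rule eig[OF that])
  define f where "f x = (\<Sum>b\<in>B. (sqrt (lam b) * (b \<bullet> x)) *\<^sub>R b)" for x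
  have "linear f"
    by (rule linearI)
      (simp_all add: f_def inner_add_right algebra_simps sum.distrib scaleR_add_left scaleR_sum_right)
  then have Rv: "matrix f *v x = f x" for x by (simp add: matrix_works)
  have inner_f: "y \<bullet> f x = (\<Sum>b\<in>B. sqrt (lam b) * (b \<bullet> x) * (b \<bullet> y))" for x y
    by (simp add: f_def inner_sum_right mult.commute mult.left_commute inner_commute)
  have "(matrix f ** matrix f) *v x = S *v x" for x
  proof -
    have "(matrix f ** matrix f) *v x = (\<Sum>b\<in>B. (sqrt (lam b) * (b \<bullet> f x)) *\<^sub>R b)"
      by (simp add: Rv matrix_vector_mul_assoc[symmetric] f_def)
    also have "\<dots> = (\<Sum>b\<in>B. (b \<bullet> x) *\<^sub>R (S *v b))"
      using fin orth unit
      by (intro sum.cong refl) (simp add: f_def inner_sum_orthonormal lam eig_lam)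
    also have "\<dots> = S *v x"
      by (rule matrix_vector_mult_in_basis[OF expand, symmetric])
    finally show ?thesis .
  qed
  then have "matrix f ** matrix f = S" by (simp add: matrix_eq)
  moreover have "psd_matrix (matrix f)"
    unfolding psd_matrix_def
  proof
    show "transpose (matrix f) = matrix f"
      by (rule symmetric_matrix_if_inner_swap)
        (simp add: Rv inner_f inner_commute[of "f _"] mult.commute mult.left_commute)
    show "\<forall>x. 0 \<le> x \<bullet> (matrix f *v x)"
      by (simp add: Rv inner_f lam sum_nonneg mult.assoc)
  qed
  ultimately show ?thesis using that by blast
qed

lemma mat_sqrt:
  fixes S :: "real^'n^'n"
  assumes "psd_matrix S"
  shows "psd_matrix (mat_sqrt S)" "mat_sqrt S ** mat_sqrt S = S"
proof -
  obtain R where "psd_matrix R" "R ** R = S" using psd_matrix_sqrt_exists[OF assms] .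
  then have "\<exists>!R. psd_matrix R \<and> R ** R = S"
    using psd_matrix_sqrt_unique[OF assms] by blast
  from theI'[OF this] show "psd_matrix (mat_sqrt S)" "mat_sqrt S ** mat_sqrt S = S"
    unfolding mat_sqrt_def by auto
qed

lemma norm_vector_mult_mat_sqrt:
  fixes S :: "real^'n^'n"
  assumes "psd_matrix S"
  shows "norm (v v* mat_sqrt S) = sqrt (v \<bullet> (S *v v))"
proof -
  have sym: "transpose (mat_sqrt S) = mat_sqrt S"
    using mat_sqrt(1)[OF assms] by (simp add: psd_matrix_def)
  then have "(v v* mat_sqrt S) \<bullet> (v v* mat_sqrt S) = v \<bullet> (mat_sqrt S *v (mat_sqrt S *v v))"
    by (metis symmetric_matrix_inner_swap transpose_matrix_vector)
  also have "\<dots> = v \<bullet> (S *v v)"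
    using mat_sqrt(2)[OF assms] by (simp add: matrix_vector_mul_assoc)
  finally show ?thesis by (simp add: norm_eq_sqrt_inner)
qed

lemma sum_UNIV_Plus:
  "(\<Sum>i\<in>(UNIV::('a::finite + 'b::finite) set). g i) = (\<Sum>a\<in>UNIV. g (Inl a)) + (\<Sum>b\<in>UNIV. g (Inr b))"
  by (subst UNIV_Plus_UNIV[symmetric], subst sum.Plus) (simp_all add: o_def)

lemma block_diag_quadratic_form:
  fixes S1 :: "real^'m^'m" and S2 :: "real^'n^'n" and v :: "real^('m+'n)"
  shows "v \<bullet> (block_diag S1 S2 *v v) =
    (\<chi> a. v $ Inl a) \<bullet> (S1 *v (\<chi> a. v $ Inl a)) + (\<chi> b. v $ Inr b) \<bullet> (S2 *v (\<chi> b. v $ Inr b))"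
  by (simp add: inner_vec_def matrix_vector_mult_def block_diag_def sum_UNIV_Plus)

lemma transpose_block_diag:
  "transpose (block_diag S1 S2) = block_diag (transpose S1) (transpose S2)"
  by (simp add: vec_eq_iff transpose_def block_diag_def split: sum.split)

lemma psd_matrix_block_diag:
  assumes "psd_matrix S1" "psd_matrix S2"
  shows "psd_matrix (block_diag S1 S2)"
  using assms unfolding psd_matrix_def
  by (auto simp: transpose_block_diag block_diag_quadratic_form intro: add_nonneg_nonneg)

lemma aug_B_quadratic_form_block_diag:
  fixes h :: "real^'n" and B :: "real^'m^'n"
  shows "(h v* aug_B B) \<bullet> (block_diag S1 S2 *v (h v* aug_B B)) =
     (h v* B) \<bullet> (S1 *v (h v* B)) + h \<bullet> (S2 *v h)"
proof -
  have "(\<chi> a. (h v* aug_B B) $ Inl a) = h v* B"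
    by (simp add: vec_eq_iff vector_matrix_mult_def aug_B_def mult.commute)
  moreover have "(\<chi> a. (h v* aug_B B) $ Inr a) = h"
    by (simp add: vec_eq_iff vector_matrix_mult_def aug_B_def if_distrib cong: if_cong)
  ultimately show ?thesis by (simp add: block_diag_quadratic_form)
qed

lemma norm_aug_B_mat_sqrt_block_diag:
  fixes h :: "real^'n" and B :: "real^'m^'n"
  assumes "psd_matrix S1" "psd_matrix S2"
  shows "norm ((h v* aug_B B) v* mat_sqrt (block_diag S1 S2)) =
    sqrt ((h v* B) \<bullet> (S1 *v (h v* B)) + h \<bullet> (S2 *v h))"
  using norm_vector_mult_mat_sqrt[OF psd_matrix_block_diag[OF assms]]
  by (simp add: aug_B_quadratic_form_block_diag)

abbreviation std_normal :: "real measure" where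
  "std_normal \<equiv> density lborel std_normal_density"

lemma real_distribution_std_normal: "real_distribution std_normal"
  using prob_space_normal_density by (auto simp: real_distribution_def real_distribution_axioms_def)

lemma Phi_eq_cdf: "Phi = cdf std_normal"
  by (simp add: fun_eq_iff Phi_def cdf_def)

lemma std_normal_null_sets: "A \<in> null_sets std_normal \<longleftrightarrow> A \<in> null_sets lborel"
proof -
  have pos: "std_normal_density t > 0" for t by (simp add: normal_density_pos)
  have "A \<in> null_sets std_normal \<longleftrightarrow>
      A \<in> sets lborel \<and> (AE t in lborel. t \<in> A \<longrightarrow> ennreal (std_normal_density t) = 0)"
    by (rule null_sets_density_iff) simp
  also have "\<dots> \<longleftrightarrow> A \<in> sets lborel \<and> (AE t in lborel. t \<notin> A)"
    using pos by (intro conj_cong refl AE_cong) (auto simp: less_le)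
  also have "\<dots> \<longleftrightarrow> A \<in> null_sets lborel"
    by (auto simp: AE_iff_null_sets AE_not_in)
  finally show ?thesis .
qed

lemma isCont_Phi: "isCont Phi x"
proof -
  interpret real_distribution std_normal by (rule real_distribution_std_normal)
  have "{x} \<in> null_sets lborel" using AE_lborel_singleton[of x] by (subst AE_iff_null_sets) auto
  then have "{x} \<in> null_sets std_normal" by (simp add: std_normal_null_sets)
  then show ?thesis by (simp add: Phi_eq_cdf isCont_cdf measure_def null_setsD1)
qed

lemma Phi_strict_mono:
  assumes "x < y" shows "Phi x < Phi y"
proof -
  interpret real_distribution std_normal by (rule real_distribution_std_normal)
  have "{x<..y} \<notin> null_sets lborel" using assms by (simp add: null_sets_def)
  then have "{x<..y} \<notin> null_sets std_normal" by (simp add: std_normal_null_sets)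
  then have "measure std_normal {x<..y} > 0"
    by (simp add: null_sets_def emeasure_eq_measure zero_less_measure_iff)
  then show ?thesis using cdf_diff_eq[OF assms] by (simp add: Phi_eq_cdf)
qed

lemma Phi_mono: "x \<le> y \<Longrightarrow> Phi x \<le> Phi y"
  using Phi_strict_mono by (cases "x = y") (auto simp: order_le_less)

lemma Phi_zero: "Phi 0 = 1/2"
proof -
  interpret real_distribution std_normal by (rule real_distribution_std_normal)
  have "distributed std_normal lborel (\<lambda>x. x) std_normal_density"
    by (auto simp: distributed_def distr_id2)
  from normal_density_affine[OF this, of "-1" 0]
  have reflect: "distr std_normal lborel uminus = std_normal"
    and "uminus \<in> measurable std_normal lborel"
    by (auto simp: distributed_def)
  then have "measure std_normal {0..} = measure std_normal {..0}"
    by (subst (2) reflect[symmetric], subst measure_distr) (auto intro!: arg_cong[where f="measure _"])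
  moreover have "measure std_normal {0..} = measure std_normal {0<..}"
    using std_normal_null_sets[of "{0}"] finite_measure_Union[of "{0}" "{0<..}"]
    by (simp add: ivl_disj_un_singleton(1)[symmetric] measure_eq_emeasure_eq_ennreal null_sets_def)
  moreover have "measure std_normal {..0} + measure std_normal {0<..} = 1"
  proof -
    have "{..0} \<union> {0<..} = (UNIV :: real set)" "{..0} \<inter> {0<..} = ({} :: real set)" by auto
    then show ?thesis using finite_measure_Union[of "{..0}" "{0<..}"] prob_space by simp
  qed
  ultimately show ?thesis by (simp add: Phi_def)
qed

lemma Phi_Phi_inv:
  assumes "0 < q" "q < 1"
  shows "Phi (Phi_inv q) = q"
proof -
  interpret real_distribution std_normal by (rule real_distribution_std_normal)
  have "eventually (\<lambda>x. q < Phi x) at_top"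
    using order_tendstoD(1)[OF cdf_lim_at_top_prob assms(2)] by (simp add: Phi_eq_cdf)
  then obtain b where b: "q < Phi b" by (auto simp: eventually_at_top_linorder)
  have "eventually (\<lambda>x. Phi x < q) at_bot"
    using order_tendstoD(2)[OF cdf_lim_at_bot assms(1)] by (simp add: Phi_eq_cdf)
  then obtain a where a: "Phi a < q" by (auto simp: eventually_at_bot_linorder)
  have "a \<le> b" using a b Phi_mono[of b a] by linarith
  then obtain x where "Phi x = q" using IVT[of Phi a q b] a b isCont_Phi by auto
  moreover have "y = x" if "Phi y = q" for y
    using Phi_strict_mono[of y x] Phi_strict_mono[of x y] \<open>Phi x = q\<close> that by (cases y x rule: linorder_cases) auto
  ultimately have "\<exists>!x. Phi x = q" by blast
  then show ?thesis unfolding Phi_inv_def by (rule theI')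
qed

lemma Phi_inv_pos:
  assumes "1/2 < q" "q < 1"
  shows "0 < Phi_inv q"
  using Phi_mono[of "Phi_inv q" 0] Phi_Phi_inv[of q] Phi_zero assms by fastforce

lemma gaussian_rv_nonneg: "gaussian_rv M X m v \<Longrightarrow> 0 \<le> v"
  by (auto simp: gaussian_rv_def)

lemma gaussian_rv_zero_AE:
  assumes "gaussian_rv M X m 0"
  shows "AE \<omega> in M. X \<omega> = m"
proof -
  have X: "X \<in> borel_measurable M" and d: "distr M borel X = return borel m"
    using assms by (auto simp: gaussian_rv_def)
  have "AE x in distr M borel X. x = m" unfolding d by (subst AE_return) auto
  then show ?thesis by (simp add: AE_distr_iff[OF X])
qed

lemma gaussian_rv_AE_cong:
  assumes "gaussian_rv M Y m v" "Z \<in> borel_measurable M" "AE \<omega> in M. Z \<omega> = Y \<omega>"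
  shows "gaussian_rv M Z m v"
proof -
  have Y: "Y \<in> borel_measurable M" using assms(1) by (simp add: gaussian_rv_def)
  have "distr M borel Z = distr M borel Y"
    by (rule distr_cong_AE[OF refl refl assms(3) assms(2) Y])
  moreover have "distr M lborel Z = distr M lborel Y"
    using assms(2,3) Y by (intro distr_cong_AE) auto
  ultimately show ?thesis using assms(1,2) by (auto simp: gaussian_rv_def distributed_def)
qed

context prob_space
begin

lemma gaussian_rv_add_const:
  assumes g: "gaussian_rv M X m v"
  shows "gaussian_rv M (\<lambda>\<omega>. X \<omega> + c) (m + c) v"
proof -
  have X: "X \<in> borel_measurable M" using g by (simp add: gaussian_rv_def)
  show ?thesis
  proof (cases "v = 0")
    case True
    then have "distr M borel X = return borel m" using g by (simp add: gaussian_rv_def)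
    then have "distr (distr M borel X) borel (\<lambda>x. x + c) = return borel (m + c)"
      by (simp add: distr_return)
    then show ?thesis using True X by (simp add: gaussian_rv_def distr_distr o_def)
  next
    case False
    then have "v > 0" and "distributed M lborel X (normal_density m (sqrt v))"
      using g by (auto simp: gaussian_rv_def)
    from normal_density_affine[OF this(2), of 1 c] this(1)
    show ?thesis using X by (simp add: gaussian_rv_def add.commute)
  qed
qed

lemma gaussian_rv_add_degenerate:
  assumes "gaussian_rv M X m1 0" "gaussian_rv M Y m2 v"
  shows "gaussian_rv M (\<lambda>\<omega>. X \<omega> + Y \<omega>) (m1 + m2) v"
proof (rule gaussian_rv_AE_cong)
  show "gaussian_rv M (\<lambda>\<omega>. Y \<omega> + m1) (m1 + m2) v"
    using gaussian_rv_add_const[OF assms(2)] by (simp add: add.commute)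
  show "(\<lambda>\<omega>. X \<omega> + Y \<omega>) \<in> borel_measurable M"
    using assms by (simp add: gaussian_rv_def borel_measurable_add)
  show "AE \<omega> in M. X \<omega> + Y \<omega> = Y \<omega> + m1"
    using gaussian_rv_zero_AE[OF assms(1)] by eventually_elim simp
qed

lemma gaussian_rv_add:
  assumes X: "gaussian_rv M X m1 v1" and Y: "gaussian_rv M Y m2 v2"
    and indep: "indep_var borel X borel Y"
  shows "gaussian_rv M (\<lambda>\<omega>. X \<omega> + Y \<omega>) (m1 + m2) (v1 + v2)"
proof -
  consider "v1 = 0" | "v2 = 0" | "v1 > 0" "v2 > 0"
    using gaussian_rv_nonneg[OF X] gaussian_rv_nonneg[OF Y] by fastforce
  then show ?thesis
  proof cases
    case 1
    then show ?thesis using gaussian_rv_add_degenerate X Y by simp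
  next
    case 2
    then show ?thesis using gaussian_rv_add_degenerate[of Y m2 X m1 v1] X Y by (simp add: add.commute)
  next
    case 3
    then have "distributed M lborel X (normal_density m1 (sqrt v1))"
      "distributed M lborel Y (normal_density m2 (sqrt v2))"
      using X Y by (auto simp: gaussian_rv_def)
    from add_indep_normal[OF indep _ _ this] 3
    show ?thesis using X Y by (simp add: gaussian_rv_def borel_measurable_add)
  qed
qed

lemma gaussian_rv_prob_le:
  assumes g: "gaussian_rv M X m v" and "0 < q" "q < 1"
    and c: "Phi_inv q * sqrt v \<le> c - m"
  shows "q \<le> prob {\<omega> \<in> space M. X \<omega> \<le> c}"
proof -
  have X: "X \<in> borel_measurable M" using g by (simp add: gaussian_rv_def)
  show ?thesis
  proof (cases "v = 0")
    case True
    then have "distr M borel X = return borel m" using g by (simp add: gaussian_rv_def)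
    moreover have "prob {\<omega> \<in> space M. X \<omega> \<le> c} = measure (distr M borel X) {..c}"
      using X by (subst measure_distr) (auto intro!: arg_cong[where f=prob])
    ultimately show ?thesis using True c \<open>q < 1\<close> by (simp add: measure_return)
  next
    case False
    then have sv: "sqrt v > 0" using gaussian_rv_nonneg[OF g] by simp
    have "distributed M lborel X (normal_density m (sqrt v))"
      using g False by (simp add: gaussian_rv_def)
    then have Z: "distributed M lborel (\<lambda>\<omega>. (X \<omega> - m) / sqrt v) std_normal_density"
      using normal_standard_normal_convert[OF sv] by simp
    have "prob {\<omega> \<in> space M. X \<omega> \<le> c} =
        prob ((\<lambda>\<omega>. (X \<omega> - m) / sqrt v) -` {..(c - m) / sqrt v} \<inter> space M)"
      using sv by (auto simp: divide_le_cancel intro!: arg_cong[where f=prob])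
    also have "\<dots> = measure (distr M lborel (\<lambda>\<omega>. (X \<omega> - m) / sqrt v)) {..(c - m) / sqrt v}"
      using Z by (subst measure_distr) (auto simp: distributed_def)
    also have "\<dots> = Phi ((c - m) / sqrt v)"
      using Z by (simp add: Phi_def distributed_def)
    finally have "prob {\<omega> \<in> space M. X \<omega> \<le> c} = Phi ((c - m) / sqrt v)" .
    moreover have "Phi_inv q \<le> (c - m) / sqrt v" using c sv by (simp add: le_divide_eq)
    ultimately show ?thesis using Phi_mono Phi_Phi_inv assms(2,3) by metis
  qed
qed

lemma indep_var_compose_of_distr_pair:
  assumes X: "X \<in> borel_measurable M" and Y: "Y \<in> borel_measurable M"
    and XY: "distr M (borel \<Otimes>\<^sub>M borel) (\<lambda>\<omega>. (X \<omega>, Y \<omega>)) = distr M borel X \<Otimes>\<^sub>M distr M borel Y"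
    and f: "f \<in> borel_measurable borel" and g: "g \<in> borel_measurable borel"
  shows "indep_var borel (\<lambda>\<omega>. f (X \<omega>)) borel (\<lambda>\<omega>. g (Y \<omega>))"
proof -
  have fX: "distr (distr M borel X) borel f = distr M borel (\<lambda>\<omega>. f (X \<omega>))"
    using distr_distr[OF f X] by (simp add: o_def)
  have gY: "distr (distr M borel Y) borel g = distr M borel (\<lambda>\<omega>. g (Y \<omega>))"
    using distr_distr[OF g Y] by (simp add: o_def)
  have "sigma_finite_measure (distr M borel (\<lambda>\<omega>. g (Y \<omega>)))"
    using prob_space_distr[of "\<lambda>\<omega>. g (Y \<omega>)"] g Y by (simp add: prob_space_imp_sigma_finite)
  then have "distr M borel (\<lambda>\<omega>. f (X \<omega>)) \<Otimes>\<^sub>M distr M borel (\<lambda>\<omega>. g (Y \<omega>))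
      = distr (distr M borel X \<Otimes>\<^sub>M distr M borel Y) (borel \<Otimes>\<^sub>M borel) (\<lambda>(x, y). (f x, g y))"
    using pair_measure_distr[of f "distr M borel X" borel g "distr M borel Y" borel] f g
    by (simp add: fX gY)
  also have "\<dots> = distr M (borel \<Otimes>\<^sub>M borel) (\<lambda>\<omega>. (f (X \<omega>), g (Y \<omega>)))"
    unfolding XY[symmetric] using X Y f g by (subst distr_distr) (auto simp: o_def)
  finally show ?thesis using X Y f g by (simp add: indep_var_distribution_eq)
qed

lemma gaussian_rv_inner_add_inner:
  assumes X: "mvn_rv M X mX SX" and Y: "mvn_rv M Y mY SY"
    and indep: "distr M (borel \<Otimes>\<^sub>M borel) (\<lambda>\<omega>. (X \<omega>, Y \<omega>)) = distr M borel X \<Otimes>\<^sub>M distr M borel Y"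
  shows "gaussian_rv M (\<lambda>\<omega>. a \<bullet> X \<omega> + b \<bullet> Y \<omega>) (a \<bullet> mX + b \<bullet> mY) (a \<bullet> (SX *v a) + b \<bullet> (SY *v b))"
proof (rule gaussian_rv_add)
  show "gaussian_rv M (\<lambda>\<omega>. a \<bullet> X \<omega>) (a \<bullet> mX) (a \<bullet> (SX *v a))"
    "gaussian_rv M (\<lambda>\<omega>. b \<bullet> Y \<omega>) (b \<bullet> mY) (b \<bullet> (SY *v b))"
    using X Y by (simp_all add: mvn_rv_def)
  show "indep_var borel (\<lambda>\<omega>. a \<bullet> X \<omega>) borel (\<lambda>\<omega>. b \<bullet> Y \<omega>)"
    using X Y indep by (intro indep_var_compose_of_distr_pair) (auto simp: mvn_rv_def)
qed

end

lemma inner_le_of_model_error_le: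
  fixes h :: "real^'n" and B :: "real^'m^'n"
  assumes "h \<bullet> (y - (A *v x + B *v (u + e))) \<le> \<delta>"
    and "(h v* B) \<bullet> e + h \<bullet> v \<le> d - h \<bullet> (A *v x + B *v u) - \<delta>"
  shows "h \<bullet> (y + v) \<le> d"
proof -
  have "h \<bullet> (y + v) =
      h \<bullet> (y - (A *v x + B *v (u + e))) + h \<bullet> (A *v x + B *v u) + ((h v* B) \<bullet> e + h \<bullet> v)"
    by (simp add: dot_lmul_matrix inner_add_right inner_diff_right matrix_vector_right_distrib)
  then show ?thesis using assms by linarith
qed

lemma borel_measurable_inner_affine:
  fixes G :: "real^'m^'n"
  assumes "X \<in> borel_measurable M" "Y \<in> borel_measurable M"
  shows "(\<lambda>\<omega>. h \<bullet> (y + G *v (u + X \<omega>) + Y \<omega>)) \<in> borel_measurable M"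
proof -
  have "h \<bullet> (y + G *v (u + e) + v) = h \<bullet> (y + G *v u) + (h v* G) \<bullet> e + h \<bullet> v" for e v
    by (simp add: dot_lmul_matrix inner_add_right matrix_vector_right_distrib)
  then show ?thesis using assms by simp
qed

theorem lemma1:
  fixes M :: "'w measure"
    and f :: "real^'n \<Rightarrow> real^'n" and G :: "real^'n \<Rightarrow> real^'m^'n"
    and A :: "real^'n^'n" and B :: "real^'m^'n"
    and H :: "real^'n^'c" and d :: "real^'c"
    and mu_w :: "real^'n" and Sigma_w :: "real^'n^'n"
    and Sigma :: "real^'m^'m"
    and \<tau> :: nat and \<delta>bar \<Delta>bar :: "'c \<Rightarrow> real"
    and mu :: "real^'n \<Rightarrow> 'p \<Rightarrow> real^'m" and \<theta> :: 'p
    and x :: "real^'n"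
    and eps :: "'w \<Rightarrow> real^'m" and w :: "'w \<Rightarrow> real^'n"
    and q :: real
  assumes q: "0.5 < q" "q < 1"
    and P: "prob_space M"
    and W: "mvn_rv M w mu_w Sigma_w"
    and E: "mvn_rv M eps 0 Sigma"
    and indep: "distr M (borel \<Otimes>\<^sub>M borel) (\<lambda>\<omega>. (eps \<omega>, w \<omega>))
                 = distr M borel eps \<Otimes>\<^sub>M distr M borel w"
    and tau: "\<tau> \<ge> 1"
    and A3a: "\<And>j y u. \<bar>H $ j \<bullet> (f y + G y *v u - (A *v y + B *v u))\<bar> \<le> \<delta>bar j"
    and A3b: "\<And>j y u. \<bar>H $ j \<bullet> ((\<Sum>i<\<tau>. mpow A i) *v (f y + G y *v u - (A *v y + B *v u)))\<bar>
                        \<le> \<Delta>bar j"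
    and cond: "\<And>j \<delta>. \<delta> \<in> {\<delta>bar j, - \<delta>bar j} \<Longrightarrow>
        norm ((H $ j v* aug_B B) v* mat_sqrt (block_diag Sigma Sigma_w))
          \<le> (1 / Phi_inv q) * (d $ j - H $ j \<bullet> (A *v x + B *v mu x \<theta> + mu_w) + \<delta>)"
  shows "\<forall>j. measure M {\<omega> \<in> space M.
              H $ j \<bullet> (f x + G x *v (mu x \<theta> + eps \<omega>) + w \<omega>) \<le> d $ j} \<ge> q"
proof
  fix j
  interpret prob_space M by (rule P)
  define h where "h = H $ j"
  define s where "s = (h v* B) \<bullet> (Sigma *v (h v* B)) + h \<bullet> (Sigma_w *v h)"
  define c where "c = d $ j - h \<bullet> (A *v x + B *v mu x \<theta>) - \<delta>bar j"
  define Z where "Z = (\<lambda>\<omega>. (h v* B) \<bullet> eps \<omega> + h \<bullet> w \<omega>)"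
  have "gaussian_rv M Z (h \<bullet> mu_w) s"
    using gaussian_rv_inner_add_inner[OF E W indep, of "h v* B" h] by (simp add: Z_def s_def)
  \<comment> \<open>Only the case \<open>\<delta> = - \<delta>bar j\<close> of \<open>cond\<close> is needed.\<close>
  moreover have "Phi_inv q * sqrt s \<le> c - h \<bullet> mu_w"
    using cond[of "- \<delta>bar j" j] Phi_inv_pos[of q] q E W
    by (simp add: norm_aug_B_mat_sqrt_block_diag mvn_rv_def h_def s_def c_def inner_add_right
        field_simps)
  ultimately have "q \<le> prob {\<omega> \<in> space M. Z \<omega> \<le> c}"
    using q by (intro gaussian_rv_prob_le) auto
  also have "\<dots> \<le> prob {\<omega> \<in> space M. h \<bullet> (f x + G x *v (mu x \<theta> + eps \<omega>) + w \<omega>) \<le> d $ j}"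
  proof (rule finite_measure_mono)
    show "{\<omega> \<in> space M. Z \<omega> \<le> c} \<subseteq> {\<omega> \<in> space M. h \<bullet> (f x + G x *v (mu x \<theta> + eps \<omega>) + w \<omega>) \<le> d $ j}"
      using abs_le_D1[OF A3a[of j x]]
      by (auto simp: Z_def c_def h_def intro: inner_le_of_model_error_le[where u = "mu x \<theta>"])
    show "{\<omega> \<in> space M. h \<bullet> (f x + G x *v (mu x \<theta> + eps \<omega>) + w \<omega>) \<le> d $ j} \<in> sets M"
      using borel_measurable_inner_affine[of eps M w] E W by (simp add: mvn_rv_def borel_measurable_iff_le)
  qed
  finally show "q \<le> prob {\<omega> \<in> space M. H $ j \<bullet> (f x + G x *v (mu x \<theta> + eps \<omega>) + w \<omega>) \<le> d $ j}"
    by (simp add: h_def)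
qed

end
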